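(* $\delta^3-2d^2\delta^3-3d\delta^2+4d^3=0$.
   Context: Let $0<\kappa<1$. Let $F(\tfrac16,\tfrac56;\tfrac12;\cdot)$ denote the Gauss hypergeometric function. Define $u$ as a function of $\phi$ near $0$ by $u=\int_0^{\sin\phi}F(\tfrac16,\tfrac56;\tfrac12;\kappa^2t^2)\,\frac{dt}{\sqrt{1-t^2}}$; near the origin (fixing $0$) this inverts to a holomorphic function $u\mapsto\phi(u)$ with $\phi(0)=0$. Let $\psi$ be the holomorphic function near $0$ with $\psi(0)=0$ and $\sin\psi=\kappa\sin\phi$. Set $d=\cos\psi$ and $\delta=\phi'=d\phi/du$, as functions of $u$ on a small disc about $0$. *)

theory Defs
  imports "HOL-Complex_Analysis.Complex_Analysis"
begin

definition hypgeom :: "complex \<Rightarrow> complex \<Rightarrow> complex \<Rightarrow> complex \<Rightarrow> complex" where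
  "hypgeom a b c z =
     (\<Sum>n. (pochhammer a n * pochhammer b n / (pochhammer c n * fact n)) * z ^ n)"

definition u_of_phi :: "real \<Rightarrow> complex \<Rightarrow> complex" where
  "u_of_phi \<kappa> \<phi> =
     contour_integral (linepath 0 (sin \<phi>))
       (\<lambda>t. hypgeom (1/6) (5/6) (1/2) ((of_real \<kappa>)\<^sup>2 * t\<^sup>2) / csqrt (1 - t\<^sup>2))"

end

theory Submission
  imports Defs
begin

(* Substituting t = sin phi gives du/dphi = F(1/6,5/6;1/2; kappa^2 sin^2 phi) = F(1/6,5/6;1/2; sin^2 psi).
   For y(w) = cos w * F(a,1-a;1/2; sin^2 w) the hypergeometric equation becomes y'' = -(1-2a)^2 y,
   so y(w) = cos((1-2a) w); with a = 1/6 this gives delta = cos psi / cos(2 psi/3).  The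
   triple-angle formula cos(3x) = 4 cos^3 x - 3 cos x at x = 2 psi/3 then eliminates cos(2 psi/3). *)

definition hypgeom_coeff :: "'a::field_char_0 \<Rightarrow> 'a \<Rightarrow> 'a \<Rightarrow> nat \<Rightarrow> 'a" where
  "hypgeom_coeff a b c n = pochhammer a n * pochhammer b n / (pochhammer c n * fact n)"

definition hypgeom_fps :: "complex \<Rightarrow> complex \<Rightarrow> complex \<Rightarrow> complex fps" where
  "hypgeom_fps a b c = Abs_fps (hypgeom_coeff a b c)"

lemma hypgeom_eq_eval_fps: "hypgeom a b c = eval_fps (hypgeom_fps a b c)"
  by (simp add: fun_eq_iff hypgeom_def eval_fps_def hypgeom_fps_def hypgeom_coeff_def)

lemma hypgeom_coeff_0 [simp]: "hypgeom_coeff a b c 0 = 1"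
  by (simp add: hypgeom_coeff_def)

lemma hypgeom_at_0 [simp]: "hypgeom a b c 0 = 1"
  by (simp add: hypgeom_eq_eval_fps eval_fps_at_0 hypgeom_fps_def)

lemma hypgeom_coeff_Suc:
  "hypgeom_coeff a b c (Suc n) =
     hypgeom_coeff a b c n * ((a + of_nat n) * (b + of_nat n)) / ((c + of_nat n) * (of_nat n + 1))"
  by (simp add: hypgeom_coeff_def pochhammer_Suc mult_ac)

lemma hypgeom_fps_ode:
  fixes a b c :: complex
  assumes "c \<notin> \<int>\<^sub>\<le>\<^sub>0"
  defines "F \<equiv> hypgeom_fps a b c"
  shows "fps_X * (1 - fps_X) * fps_deriv (fps_deriv F)
           + (fps_const c - fps_const (a + b + 1) * fps_X) * fps_deriv F
           - fps_const (a * b) * F = 0" (is "?L = 0")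
proof (rule fps_ext)
  fix n
  let ?f = "hypgeom_coeff a b c"
  have "c + of_nat n \<noteq> 0"
  proof
    assume "c + of_nat n = 0"
    then have "c = - of_nat n"
      by (simp add: eq_neg_iff_add_eq_0)
    with assms show False
      by simp
  qed
  moreover have "of_nat n + 1 \<noteq> (0 :: complex)"
    by (metis add.commute of_nat_Suc of_nat_neq_0)
  ultimately have "(c + of_nat n) * (of_nat n + 1) * ?f (Suc n) = (a + of_nat n) * (b + of_nat n) * ?f n"
    by (simp add: hypgeom_coeff_Suc)
  moreover have "fps_nth ?L n
      = (c + of_nat n) * (of_nat n + 1) * ?f (Suc n) - (a + of_nat n) * (b + of_nat n) * ?f n"
    by (cases n) (simp_all add: F_def hypgeom_fps_def algebra_simps)
  ultimately show "fps_nth ?L n = fps_nth 0 n"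
    by simp
qed

lemma of_real_hypgeom_coeff:
  fixes a b c :: real
  shows "of_real (hypgeom_coeff a b c n) =
           (hypgeom_coeff (of_real a) (of_real b) (of_real c) n :: 'a::{real_field,field_char_0})"
  by (simp add: hypgeom_coeff_def pochhammer_of_real)

lemma hypgeom_coeff_bounds:
  fixes a b c :: real
  assumes "0 \<le> a" "0 \<le> b" "0 < c" "a * b \<le> c" "a + b \<le> c + 1"
  shows "0 \<le> hypgeom_coeff a b c n \<and> hypgeom_coeff a b c n \<le> 1"
proof (induction n)
  case (Suc n)
  define q where "q = ((a + n) * (b + n)) / ((c + n) * (n + 1))"
  have "(a + n) * (b + n) \<le> (c + n) * (n + 1)"
    using assms mult_right_mono[OF assms(5), of n] by (simp add: algebra_simps)
  then have "0 \<le> q \<and> q \<le> 1"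
    using assms by (simp add: q_def add_pos_nonneg)
  moreover have "hypgeom_coeff a b c (Suc n) = hypgeom_coeff a b c n * q"
    by (simp add: hypgeom_coeff_Suc q_def)
  ultimately show ?case
    using Suc by (simp add: mult_le_one)
qed simp

lemma fps_conv_radius_hypgeom_fps:
  fixes a b c :: real
  assumes "0 \<le> a" "0 \<le> b" "0 < c" "a * b \<le> c" "a + b \<le> c + 1"
  shows "1 \<le> fps_conv_radius (hypgeom_fps (of_real a) (of_real b) (of_real c))"
  unfolding fps_conv_radius_def hypgeom_fps_def fps_nth_Abs_fps
proof (rule conv_radius_geI_ex')
  fix r :: real
  assume r: "0 < r" "ereal r < 1"
  show "summable (\<lambda>n. hypgeom_coeff (of_real a) (of_real b) (of_real c) n * (of_real r :: complex) ^ n)"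
  proof (rule summable_comparison_test')
    show "summable (\<lambda>n. r ^ n)"
      using r by (simp add: summable_geometric)
    show "norm (hypgeom_coeff (of_real a) (of_real b) (of_real c) n * (of_real r :: complex) ^ n) \<le> r ^ n" for n
      using hypgeom_coeff_bounds[OF assms, of n] r
      by (simp flip: of_real_hypgeom_coeff add: norm_mult norm_power mult_left_le_one_le)
  qed
qed

lemma fps_conv_radius_hypgeom_fps_sixths: "1 \<le> fps_conv_radius (hypgeom_fps (1/6) (5/6) (1/2))"
  using fps_conv_radius_hypgeom_fps[of "1/6" "5/6" "1/2"] by simp

lemma hypgeom_ode:
  fixes a b c :: complex
  assumes "c \<notin> \<int>\<^sub>\<le>\<^sub>0" "0 < fps_conv_radius (hypgeom_fps a b c)"
  defines "h \<equiv> hypgeom a b c"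
  shows "\<forall>\<^sub>F z in nhds 0.
           z * (1 - z) * deriv (deriv h) z + (c - (a + b + 1) * z) * deriv h z - a * b * h z = 0"
proof -
  define F where "F = hypgeom_fps a b c"
  define L where "L z = z * (1 - z) * deriv (deriv h) z + (c - (a + b + 1) * z) * deriv h z - a * b * h z"
    for z
  have h: "h has_fps_expansion F"
    using assms by (simp add: h_def F_def hypgeom_eq_eval_fps eval_fps_has_fps_expansion)
  have D1: "deriv h has_fps_expansion fps_deriv F"
    by (rule has_fps_expansion_deriv[OF h])
  have D2: "deriv (deriv h) has_fps_expansion fps_deriv (fps_deriv F)"
    by (rule has_fps_expansion_deriv[OF D1])
  have P2: "(\<lambda>z::complex. z * (1 - z)) has_fps_expansion fps_X * (1 - fps_X)"
    by (rule has_fps_expansion_mult[OF has_fps_expansion_fps_X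
          has_fps_expansion_diff[OF has_fps_expansion_1 has_fps_expansion_fps_X]])
  have P1: "(\<lambda>z. c - (a + b + 1) * z) has_fps_expansion fps_const c - fps_const (a + b + 1) * fps_X"
    by (rule has_fps_expansion_diff[OF has_fps_expansion_const
          has_fps_expansion_cmult_left[OF has_fps_expansion_fps_X]])
  have "L has_fps_expansion
          fps_X * (1 - fps_X) * fps_deriv (fps_deriv F)
          + (fps_const c - fps_const (a + b + 1) * fps_X) * fps_deriv F - fps_const (a * b) * F"
    unfolding L_def[abs_def]
    by (rule has_fps_expansion_diff[OF has_fps_expansion_add[OF has_fps_expansion_mult[OF P2 D2]
          has_fps_expansion_mult[OF P1 D1]] has_fps_expansion_cmult_left[OF h]])
  then have "L has_fps_expansion 0"
    by (simp only: F_def hypgeom_fps_ode[OF assms(1)])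
  then have "\<forall>\<^sub>F z in nhds 0. 0 = L z"
    by (simp add: has_fps_expansion_def)
  then show ?thesis
    by (rule eventually_mono) (simp add: L_def)
qed

lemma eventually_eq_cos_if_ode:
  fixes G G' :: "complex \<Rightarrow> complex" and k :: complex
  assumes "k \<noteq> 0"
    and "\<forall>\<^sub>F w in nhds 0. (G has_field_derivative G' w) (at w)
                          \<and> (G' has_field_derivative - (k\<^sup>2 * G w)) (at w)"
    and "G 0 = 1" "G' 0 = 0"
  shows "\<forall>\<^sub>F w in nhds 0. G w = cos (k * w)"
proof -
  obtain e where "e > 0" and e: "\<And>w. w \<in> ball 0 e \<Longrightarrow>
      (G has_field_derivative G' w) (at w) \<and> (G' has_field_derivative - (k\<^sup>2 * G w)) (at w)"
    using assms(2) by (auto simp: eventually_nhds_metric dist_commute)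
  define A where "A w = k * G w * cos (k * w) - G' w * sin (k * w)" for w
  define B where "B w = k * G w * sin (k * w) + G' w * cos (k * w)" for w
  have "(A has_field_derivative 0) (at w within ball 0 e)" "(B has_field_derivative 0) (at w within ball 0 e)"
    if "w \<in> ball 0 e" for w
  proof -
    note [derivative_intros] = e[OF that, THEN conjunct1] e[OF that, THEN conjunct2]
    have "(A has_field_derivative 0) (at w)" "(B has_field_derivative 0) (at w)"
      unfolding A_def[abs_def] B_def[abs_def]
      by (rule derivative_eq_intros refl | simp add: power2_eq_square algebra_simps)+
    then show "(A has_field_derivative 0) (at w within ball 0 e)" "(B has_field_derivative 0) (at w within ball 0 e)"
      by (auto intro: has_field_derivative_at_within)
  qed
  then obtain cA cB where "\<forall>w\<in>ball 0 e. A w = cA" "\<forall>w\<in>ball 0 e. B w = cB"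
    by (metis convex_ball has_field_derivative_zero_constant)
  moreover have "A 0 = k" "B 0 = 0"
    using assms(3,4) by (simp_all add: A_def B_def)
  ultimately have AB: "A w = k" "B w = 0" if "w \<in> ball 0 e" for w
    using that \<open>e > 0\<close> by auto
  have "k * G w = A w * cos (k * w) + B w * sin (k * w)" for w
    unfolding A_def B_def using sin_cos_squared_add[of "k * w"] by algebra
  then have "k * G w = k * cos (k * w)" if "w \<in> ball 0 e" for w
    using AB[OF that] by simp
  then have G_eq: "G w = cos (k * w)" if "w \<in> ball 0 e" for w
    using that assms(1) by simp
  show ?thesis
    using eventually_nhds_ball[OF \<open>e > 0\<close>, of 0] by (rule eventually_mono) (rule G_eq)
qed

lemma eventually_has_field_derivative_hypgeom:
  assumes "0 < fps_conv_radius (hypgeom_fps a b c)"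
  defines "h \<equiv> hypgeom a b c"
  shows "\<forall>\<^sub>F z in nhds 0. (h has_field_derivative deriv h z) (at z)
                        \<and> (deriv h has_field_derivative deriv (deriv h) z) (at z)"
proof -
  define R where "R = fps_conv_radius (hypgeom_fps a b c)"
  have hol: "h holomorphic_on eball 0 R"
    unfolding h_def R_def hypgeom_eq_eval_fps by (rule holomorphic_on_eval_fps) (rule order.refl)
  have "\<forall>\<^sub>F z in nhds 0. z \<in> eball (0::complex) R"
    using assms(1) by (intro eventually_nhds_in_open) (auto simp: R_def zero_ereal_def)
  then show ?thesis
  proof (rule eventually_mono)
    fix z :: complex
    assume z: "z \<in> eball 0 R"
    show "(h has_field_derivative deriv h z) (at z) \<and> (deriv h has_field_derivative deriv (deriv h) z) (at z)"
      using holomorphic_derivI[OF hol open_eball z]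
            holomorphic_derivI[OF holomorphic_deriv[OF hol open_eball] open_eball z] by blast
  qed
qed

lemma has_field_derivative_cos_mult_sin_squared:
  fixes h h' h'' :: "complex \<Rightarrow> complex" and a w :: complex
  defines "s \<equiv> sin w ^ 2"
  assumes h: "(h has_field_derivative h' s) (at s)" and h': "(h' has_field_derivative h'' s) (at s)"
    and ode: "s * (1 - s) * h'' s + (1/2 - 2 * s) * h' s - a * (1 - a) * h s = 0"
  shows "((\<lambda>v. cos v * h (sin v ^ 2)) has_field_derivative
            - sin w * h s + 2 * sin w * cos w ^ 2 * h' s) (at w)"
    and "((\<lambda>v. - sin v * h (sin v ^ 2) + 2 * sin v * cos v ^ 2 * h' (sin v ^ 2)) has_field_derivative
            - ((1 - 2 * a)\<^sup>2 * (cos w * h s))) (at w)"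
proof -
  have ds: "((\<lambda>v. sin v ^ 2) has_field_derivative 2 * sin w * cos w) (at w)"
    by (auto intro!: derivative_eq_intros)
  have dh: "((\<lambda>v. h (sin v ^ 2)) has_field_derivative D) (at w)"
    if "D = h' s * (2 * sin w * cos w)" for D
    unfolding that s_def using DERIV_chain2[OF h[unfolded s_def] ds] .
  have dh': "((\<lambda>v. h' (sin v ^ 2)) has_field_derivative D) (at w)"
    if "D = h'' s * (2 * sin w * cos w)" for D
    unfolding that s_def using DERIV_chain2[OF h'[unfolded s_def] ds] .
  show "((\<lambda>v. cos v * h (sin v ^ 2)) has_field_derivative
            - sin w * h s + 2 * sin w * cos w ^ 2 * h' s) (at w)"
    by (rule derivative_eq_intros dh refl | simp)+ (simp add: s_def algebra_simps power2_eq_square)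
  show "((\<lambda>v. - sin v * h (sin v ^ 2) + 2 * sin v * cos v ^ 2 * h' (sin v ^ 2)) has_field_derivative
            - ((1 - 2 * a)\<^sup>2 * (cos w * h s))) (at w)"
    apply (rule derivative_eq_intros dh dh' refl | simp)+
    using ode sin_cos_squared_add[of w] unfolding s_def by algebra
qed

lemma cos_mult_hypgeom_sin_squared:
  fixes a :: complex
  assumes "a \<noteq> 1/2" and "0 < fps_conv_radius (hypgeom_fps a (1 - a) (1/2))"
  shows "\<forall>\<^sub>F w in nhds 0. cos w * hypgeom a (1 - a) (1/2) (sin w ^ 2) = cos ((1 - 2 * a) * w)"
proof -
  define h where "h = hypgeom a (1 - a) (1/2)"
  have "(1/2 :: complex) \<notin> \<int>\<^sub>\<le>\<^sub>0"
    by (auto elim!: nonpos_Ints_cases simp: complex_eq_iff)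
  then have "\<forall>\<^sub>F z in nhds 0.
      z * (1 - z) * deriv (deriv h) z + (1/2 - 2 * z) * deriv h z - a * (1 - a) * h z = 0"
    using hypgeom_ode[of "1/2" a "1 - a"] assms(2) by (simp add: h_def)
  with eventually_has_field_derivative_hypgeom[OF assms(2)]
  have "\<forall>\<^sub>F z in nhds 0. (h has_field_derivative deriv h z) (at z)
                   \<and> (deriv h has_field_derivative deriv (deriv h) z) (at z)
                   \<and> z * (1 - z) * deriv (deriv h) z + (1/2 - 2 * z) * deriv h z - a * (1 - a) * h z = 0"
    unfolding h_def by eventually_elim blast
  moreover have "filterlim (\<lambda>w::complex. sin w ^ 2) (nhds 0) (nhds 0)"
    by (auto intro!: tendsto_eq_intros filterlim_ident)
  ultimately have "\<forall>\<^sub>F w in nhds 0.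
      (h has_field_derivative deriv h (sin w ^ 2)) (at (sin w ^ 2))
      \<and> (deriv h has_field_derivative deriv (deriv h) (sin w ^ 2)) (at (sin w ^ 2))
      \<and> sin w ^ 2 * (1 - sin w ^ 2) * deriv (deriv h) (sin w ^ 2)
          + (1/2 - 2 * sin w ^ 2) * deriv h (sin w ^ 2) - a * (1 - a) * h (sin w ^ 2) = 0"
    by (rule eventually_compose_filterlim)
  then have "\<forall>\<^sub>F w in nhds 0.
      ((\<lambda>v. cos v * h (sin v ^ 2)) has_field_derivative
         - sin w * h (sin w ^ 2) + 2 * sin w * cos w ^ 2 * deriv h (sin w ^ 2)) (at w)
      \<and> ((\<lambda>v. - sin v * h (sin v ^ 2) + 2 * sin v * cos v ^ 2 * deriv h (sin v ^ 2))
           has_field_derivative - ((1 - 2 * a)\<^sup>2 * (cos w * h (sin w ^ 2)))) (at w)"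
    by (rule eventually_mono) (blast intro: has_field_derivative_cos_mult_sin_squared)
  moreover have "1 - 2 * a \<noteq> 0"
    using assms(1) by (auto simp: field_simps)
  ultimately show ?thesis
    using eventually_eq_cos_if_ode[of "1 - 2 * a" "\<lambda>v. cos v * h (sin v ^ 2)"
        "\<lambda>v. - sin v * h (sin v ^ 2) + 2 * sin v * cos v ^ 2 * deriv h (sin v ^ 2)"]
    by (simp add: h_def)
qed

lemma cos_mult_hypgeom_sixths:
  "\<forall>\<^sub>F w in nhds 0. cos w * hypgeom (1/6) (5/6) (1/2) (sin w ^ 2) = cos (2/3 * w)"
proof -
  have sixths: "(1::complex) - 1/6 = 5/6" "(1::complex) - 2 * (1/6) = 2/3"
    by simp_all
  have "0 < fps_conv_radius (hypgeom_fps (1/6) (1 - 1/6) (1/2))"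
    unfolding sixths by (rule less_le_trans[OF _ fps_conv_radius_hypgeom_fps_sixths]) simp
  then have "\<forall>\<^sub>F w in nhds 0.
      cos w * hypgeom (1/6) (1 - 1/6) (1/2) (sin w ^ 2) = cos ((1 - 2 * (1/6)) * w)"
    by (rule cos_mult_hypgeom_sin_squared[rotated]) simp
  then show ?thesis
    unfolding sixths .
qed

lemma holomorphic_on_hypgeom:
  assumes "1 \<le> fps_conv_radius (hypgeom_fps a b c)"
  shows "hypgeom a b c holomorphic_on ball 0 1"
proof -
  have "ball 0 1 \<subseteq> eball 0 (fps_conv_radius (hypgeom_fps a b c))"
    using ball_eball_mono[of 1 "fps_conv_radius (hypgeom_fps a b c)" 0] assms
    by (simp add: one_ereal_def)
  then show ?thesis
    unfolding hypgeom_eq_eval_fps by (rule holomorphic_on_eval_fps)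
qed

lemma has_field_derivative_contour_integral_linepath:
  fixes f :: "complex \<Rightarrow> complex"
  assumes "f holomorphic_on S" "open S" "convex S" "a \<in> S" "w \<in> S"
  shows "((\<lambda>z. contour_integral (linepath a z) f) has_field_derivative f w) (at w)"
proof -
  obtain g where g: "\<And>z. z \<in> S \<Longrightarrow> (g has_field_derivative f z) (at z within S)"
    using holomorphic_convex_primitive'[OF assms(3,2,1)] by blast
  have primitive: "g z - g a = contour_integral (linepath a z) f" if "z \<in> S" for z
  proof -
    have "closed_segment a z \<subseteq> S"
      using assms(3,4) that by (simp add: closed_segment_subset)
    then have "(f has_contour_integral g z - g a) (linepath a z)"
      using contour_integral_primitive[OF g, of "linepath a z"] by simp
    then show ?thesis
      by (rule contour_integral_unique [symmetric])
  qed
  have "((\<lambda>z. g z - g a) has_field_derivative f w) (at w)"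
    using g[OF assms(5)] at_within_open[OF assms(5,2)] by (auto intro!: derivative_eq_intros)
  then show ?thesis
    by (rule has_field_derivative_transform_within_open[OF _ assms(2,5) primitive])
qed

lemma has_field_derivative_contour_integral_sin:
  fixes g :: "complex \<Rightarrow> complex"
  assumes "g holomorphic_on ball 0 1" "norm (sin p) < 1" "0 < Re (cos p)"
  shows "((\<lambda>p. contour_integral (linepath 0 (sin p)) (\<lambda>t. g t / csqrt (1 - t\<^sup>2)))
           has_field_derivative g (sin p)) (at p)"
proof -
  have not_nonpos: "1 - t\<^sup>2 \<notin> \<real>\<^sub>\<le>\<^sub>0" if "t \<in> ball 0 1" for t :: complex
  proof -
    have "norm t ^ 2 < 1"
      using that by (simp add: abs_square_less_1)
    then have "Re (t\<^sup>2) < 1"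
      using complex_Re_le_cmod[of "t\<^sup>2"] by (simp add: norm_power)
    then show ?thesis
      by (simp add: complex_nonpos_Reals_iff)
  qed
  have "(\<lambda>t. g t / csqrt (1 - t\<^sup>2)) holomorphic_on ball 0 1"
    using not_nonpos by (intro holomorphic_intros assms(1)) (metis csqrt_eq_0 nonpos_Reals_zero_I)+
  then have "((\<lambda>z. contour_integral (linepath 0 z) (\<lambda>t. g t / csqrt (1 - t\<^sup>2)))
               has_field_derivative g (sin p) / csqrt (1 - (sin p)\<^sup>2)) (at (sin p))"
    using assms(2) by (intro has_field_derivative_contour_integral_linepath) auto
  from DERIV_chain2[OF this DERIV_sin]
  have "((\<lambda>p. contour_integral (linepath 0 (sin p)) (\<lambda>t. g t / csqrt (1 - t\<^sup>2)))
          has_field_derivative g (sin p) / csqrt (1 - (sin p)\<^sup>2) * cos p) (at p)" .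
  moreover have "csqrt (1 - (sin p)\<^sup>2) = cos p"
    using csqrt_square[of "cos p"] assms(3) by (simp add: cos_squared_eq)
  moreover have "cos p \<noteq> 0"
    using assms(3) by auto
  ultimately show ?thesis
    by simp
qed

lemma has_field_derivative_u_of_phi:
  assumes "\<bar>\<kappa>\<bar> \<le> 1" "norm (sin p) < 1" "0 < Re (cos p)"
  shows "(u_of_phi \<kappa> has_field_derivative hypgeom (1/6) (5/6) (1/2) ((of_real \<kappa> * sin p)\<^sup>2)) (at p)"
proof -
  have image: "(\<lambda>t. (of_real \<kappa>)\<^sup>2 * t\<^sup>2) ` ball 0 1 \<subseteq> ball (0::complex) 1"
  proof clarsimp
    fix t :: complex
    assume "norm t < 1"
    then have "(norm t)\<^sup>2 < 1"
      by (simp add: abs_square_less_1)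
    moreover have "\<kappa>\<^sup>2 \<le> 1"
      using assms(1) power_le_one[of "\<bar>\<kappa>\<bar>" 2] by simp
    ultimately have "\<kappa>\<^sup>2 * (norm t)\<^sup>2 < 1"
      using mult_left_le_one_le[of "(norm t)\<^sup>2" "\<kappa>\<^sup>2"] by simp
    then show "norm ((of_real \<kappa>)\<^sup>2 * t\<^sup>2) < 1"
      by (simp add: norm_mult norm_power)
  qed
  have "(\<lambda>t. (of_real \<kappa>)\<^sup>2 * t\<^sup>2) holomorphic_on ball 0 1"
    by (intro holomorphic_intros)
  then have "(hypgeom (1/6) (5/6) (1/2) \<circ> (\<lambda>t. (of_real \<kappa>)\<^sup>2 * t\<^sup>2)) holomorphic_on ball 0 1"
    by (rule holomorphic_on_compose_gen[OF _ holomorphic_on_hypgeom[OF fps_conv_radius_hypgeom_fps_sixths] image])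
  from has_field_derivative_contour_integral_sin[OF this assms(2,3)] show ?thesis
    by (simp add: u_of_phi_def[abs_def] o_def power_mult_distrib)
qed

lemma cubic_relation_of_triple_angle:
  fixes c d \<delta> :: "'a::comm_ring_1"
  assumes "d = c * \<delta>" and "4 * c^3 - 3 * c = 2 * d^2 - 1"
  shows "\<delta>^3 - 2 * d^2 * \<delta>^3 - 3 * d * \<delta>^2 + 4 * d^3 = 0"
proof -
  have "\<delta>^3 - 2 * d^2 * \<delta>^3 - 3 * d * \<delta>^2 + 4 * d^3
          = \<delta>^3 * ((4 * c^3 - 3 * c) - (2 * d^2 - 1))"
    unfolding assms(1) by (simp add: algebra_simps power2_eq_square power3_eq_cube)
  also have "\<dots> = 0"
    by (simp only: assms(2) diff_self mult_zero_right)
  finally show ?thesis .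
qed

lemma cubic_relation_cos_two_thirds:
  fixes z \<delta> :: "'a::{real_normed_field,banach}"
  assumes "cos z = cos (2/3 * z) * \<delta>"
  shows "\<delta>^3 - 2 * cos z ^ 2 * \<delta>^3 - 3 * cos z * \<delta>^2 + 4 * cos z ^ 3 = 0"
proof (rule cubic_relation_of_triple_angle[OF assms])
  have "cos (3 * (2/3 * z)) = cos (2 * z)"
    by simp
  then show "4 * cos (2/3 * z) ^ 3 - 3 * cos (2/3 * z) = 2 * cos z ^ 2 - 1"
    by (simp only: cos_treble_cos cos_double_cos)
qed

lemma tendsto_nhds_if_holomorphic:
  assumes "f holomorphic_on S" "open S" "z \<in> S"
  shows "(f \<longlongrightarrow> f z) (nhds z)"
proof -
  have "isCont f z"
    using assms continuous_on_eq_continuous_at holomorphic_on_imp_continuous_on by blast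
  then show ?thesis
    by (simp add: isCont_def tendsto_at_iff_tendsto_nhds)
qed

lemma has_field_derivative_left_inverse_mult_eq_1:
  assumes "open S" "u \<in> S" "\<And>v. v \<in> S \<Longrightarrow> g (f v) = v"
    and "(g has_field_derivative g') (at (f u))" "(f has_field_derivative f') (at u)"
  shows "g' * f' = (1 :: 'a::real_normed_field)"
proof -
  have "((\<lambda>v. g (f v)) has_field_derivative g' * f') (at u)"
    by (rule DERIV_chain2[OF assms(4,5)])
  then have "((\<lambda>v. v) has_field_derivative g' * f') (at u)"
    by (rule has_field_derivative_transform_within_open[OF _ assms(1-3)])
  then show ?thesis
    using DERIV_ident DERIV_unique by blast
qed

lemma hypgeom_mult_deriv_eq_1_if_u_of_phi_inverse:
  assumes "\<bar>\<kappa>\<bar> \<le> 1" "open S" "u \<in> S" "\<phi> holomorphic_on S"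
    and "\<And>v. v \<in> S \<Longrightarrow> u_of_phi \<kappa> (\<phi> v) = v"
    and "norm (sin (\<phi> u)) < 1" "0 < Re (cos (\<phi> u))"
  shows "hypgeom (1/6) (5/6) (1/2) ((of_real \<kappa> * sin (\<phi> u))\<^sup>2) * deriv \<phi> u = 1"
  using has_field_derivative_left_inverse_mult_eq_1[of S u "u_of_phi \<kappa>" \<phi>]
        has_field_derivative_u_of_phi[OF assms(1,6,7)] holomorphic_derivI[OF assms(4,2,3)] assms(2,3,5)
  by blast

theorem theorem2:
  fixes \<kappa> :: real and r :: real and \<phi> \<psi> :: "complex \<Rightarrow> complex"
  assumes "0 < \<kappa>" and "\<kappa> < 1"
    and "0 < r"
    and "\<phi> holomorphic_on ball 0 r" and "\<phi> 0 = 0"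
    and "\<And>u. u \<in> ball 0 r \<Longrightarrow> u_of_phi \<kappa> (\<phi> u) = u"
    and "\<psi> holomorphic_on ball 0 r" and "\<psi> 0 = 0"
    and "\<And>u. u \<in> ball 0 r \<Longrightarrow> sin (\<psi> u) = of_real \<kappa> * sin (\<phi> u)"
  shows "\<forall>\<^sub>F u in nhds 0.
           (let d = cos (\<psi> u); \<delta> = deriv \<phi> u
            in \<delta>^3 - 2 * d^2 * \<delta>^3 - 3 * d * \<delta>^2 + 4 * d^3 = 0)"
proof -
  let ?F = "hypgeom (1/6) (5/6) (1/2)"
  have "open {z::complex. norm (sin z) < 1 \<and> 0 < Re (cos z)}"
    by (intro open_Collect_conj open_Collect_less continuous_intros)
  then have "\<forall>\<^sub>F z in nhds 0. norm (sin z) < 1 \<and> 0 < Re (cos z)"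
    using eventually_nhds_in_open[of _ 0] by force
  moreover have "filterlim \<phi> (nhds 0) (nhds 0)" "filterlim \<psi> (nhds 0) (nhds 0)"
    using tendsto_nhds_if_holomorphic[OF assms(4) open_ball, of 0]
          tendsto_nhds_if_holomorphic[OF assms(7) open_ball, of 0] assms(3,5,8) by simp_all
  ultimately have "\<forall>\<^sub>F u in nhds 0. norm (sin (\<phi> u)) < 1 \<and> 0 < Re (cos (\<phi> u))"
    and "\<forall>\<^sub>F u in nhds 0. cos (\<psi> u) * ?F (sin (\<psi> u) ^ 2) = cos (2/3 * \<psi> u)"
    using eventually_compose_filterlim cos_mult_hypgeom_sixths by blast+
  moreover have "\<forall>\<^sub>F u in nhds 0. u \<in> ball 0 r"
    using assms(3) by (rule eventually_nhds_ball)
  ultimately show ?thesis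
  proof eventually_elim
    case (elim u)
    then have u: "u \<in> ball 0 r" and "norm (sin (\<phi> u)) < 1" "0 < Re (cos (\<phi> u))"
      and closed_form: "cos (\<psi> u) * ?F (sin (\<psi> u) ^ 2) = cos (2/3 * \<psi> u)"
      by blast+
    moreover have "\<bar>\<kappa>\<bar> \<le> 1"
      using assms(1,2) by simp
    ultimately have inverse: "?F (sin (\<psi> u) ^ 2) * deriv \<phi> u = 1"
      using hypgeom_mult_deriv_eq_1_if_u_of_phi_inverse[OF _ open_ball u assms(4,6)]
      unfolding assms(9)[OF u] by blast
    have "cos (\<psi> u) = cos (\<psi> u) * (?F (sin (\<psi> u) ^ 2) * deriv \<phi> u)"
      by (simp only: inverse mult_1_right)
    also have "\<dots> = cos (2/3 * \<psi> u) * deriv \<phi> u"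
      by (simp only: mult.assoc[symmetric] closed_form)
    finally show ?case
      unfolding Let_def by (rule cubic_relation_cos_two_thirds)
  qed
qed

end
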